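(* Let $\mathbf{S}=(S_n)_{n\in\mathbb{N}}$ be a stationary ergodic information source with finite alphabet $A=\{1,\ldots,N\}$ (ordered by the usual order of integers), and let $R_n=\sum_{i=1}^{n}\delta(S_i\le S_n)$ be its rank variables. Then for every $l\ge 1$, \[ \lim_{k\to\infty} H_m\big(R_{k+1}^{k+l}\,\big|\,S_1^{k}\big)=\lim_{k\to\infty} H_m\big(S_{k+1}^{k+l}\,\big|\,S_1^{k}\big). \]
   Context: A finite-alphabet information source is a discrete-time stochastic process $\mathbf{S}=(S_n)_{n\in\mathbb{N}}$ of random variables with values in a finite alphabet $A$; it is stationary and ergodic if its sequence-space model $(A^{\mathbb{N}},\mathcal{Z},m,\sigma)$ (with $m$ the induced shift-invariant distribution on output sequences and $\sigma$ the left shift) is stationary and ergodic. For a proposition $P$, $\delta(P)=1$ if $P$ holds and $0$ otherwise. The rank variable $R_n=\sum_{i=1}^n\delta(S_i\le S_n)$ takes values in $\{1,\ldots,n\}$. For indices $i\le j$, $S_i^j$ denotes the word $S_i S_{i+1}\cdots S_j$, and similarly $R_i^j$. $H_m(\cdot\mid\cdot)$ denotes Shannon conditional entropy (logarithm base 2) computed with respect to the joint distribution of the process. *)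

theory Defs
  imports "HOL-Probability.Probability"
begin

text \<open>Sequence-space model of a process with values in the finite alphabet A = {1..N}.
  The source is S_1, S_2, ...; the value at index 0 of S is not part of the source.\<close>
definition seq_model :: "'a measure \<Rightarrow> nat \<Rightarrow> (nat \<Rightarrow> 'a \<Rightarrow> nat) \<Rightarrow> (nat \<Rightarrow> nat) measure" where
  "seq_model M N S = distr M (PiM UNIV (\<lambda>_. count_space {1..N})) (\<lambda>\<omega> n. S (Suc n) \<omega>)"

definition left_shift :: "(nat \<Rightarrow> nat) \<Rightarrow> (nat \<Rightarrow> nat)" where
  "left_shift x = (\<lambda>n. x (Suc n))"

definition stationary_model :: "(nat \<Rightarrow> nat) measure \<Rightarrow> bool" where
  "stationary_model m \<longleftrightarrow> left_shift \<in> measurable m m \<and> distr m m left_shift = m"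

definition ergodic_model :: "(nat \<Rightarrow> nat) measure \<Rightarrow> bool" where
  "ergodic_model m \<longleftrightarrow> (\<forall>B\<in>sets m. left_shift -` B \<inter> space m = B \<longrightarrow>
       emeasure m B = 0 \<or> emeasure m B = 1)"

definition rank_var :: "(nat \<Rightarrow> 'a \<Rightarrow> nat) \<Rightarrow> nat \<Rightarrow> 'a \<Rightarrow> nat" where
  "rank_var S n \<omega> = (\<Sum>i=1..n. if S i \<omega> \<le> S n \<omega> then 1 else 0)"

definition word :: "(nat \<Rightarrow> 'a \<Rightarrow> nat) \<Rightarrow> nat \<Rightarrow> nat \<Rightarrow> 'a \<Rightarrow> nat list" where
  "word X i j \<omega> = map (\<lambda>t. X t \<omega>) [i..<Suc j]"

definition cond_entropy2 :: "'a measure \<Rightarrow> ('a \<Rightarrow> 'b) \<Rightarrow> ('a \<Rightarrow> 'c) \<Rightarrow> real" where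
  "cond_entropy2 M Y X = prob_space.conditional_entropy M 2
     (count_space (Y ` space M)) (count_space (X ` space M)) Y X"

end

theory Submission
  imports Defs "HOL-Real_Asymp.Real_Asymp"
begin

text \<open>Write \<open>a\<^sub>k\<close> and \<open>c\<^sub>k\<close> for the conditional entropies, given \<open>S\<^sub>1 \<dots> S\<^sub>k\<close>, of the next \<open>l\<close>
  symbols and of their ranks. By the chain rule \<open>a\<^sub>k = H(S\<^sub>1 \<dots> S\<^sub>k\<^sub>+\<^sub>l) - H(S\<^sub>1 \<dots> S\<^sub>k)\<close>, and
  stationarity together with strong subadditivity of entropy makes this nonincreasing in \<open>k\<close>;
  being nonnegative, it converges. Given the past, the ranks are a function of the symbols, so
  \<open>c\<^sub>k \<le> a\<^sub>k\<close>. Conversely, the past and the ranks determine the symbols unless one of them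
  occurs for the first time, so \<open>a\<^sub>k \<le> c\<^sub>k + H(I\<^sub>k)\<close>, where \<open>I\<^sub>k\<close> reveals the block only in
  that event. At most \<open>N\<close> first occurrences happen along any realisation, so their
  probabilities are summable and \<open>H(I\<^sub>k) \<rightarrow> 0\<close>.\<close>

section \<open>Entropy of simple random variables\<close>

context information_space
begin

lemma entropy_cong:
  assumes "\<And>x. x \<in> space M \<Longrightarrow> X x = Y x"
  shows "\<H>(X) = \<H>(Y)"
proof -
  have "X ` space M = Y ` space M" using assms by auto
  moreover have "distr M (count_space (Y ` space M)) X = distr M (count_space (Y ` space M)) Y"
    by (rule distr_cong) (auto simp: assms)
  ultimately show ?thesis unfolding entropy_def by simp
qed

lemma determined_factors:
  assumes det: "\<And>x y. x \<in> space M \<Longrightarrow> y \<in> space M \<Longrightarrow> X x = X y \<Longrightarrow> Y x = Y y"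
    and x: "x \<in> space M"
  shows "Y x = (Y \<circ> inv_into (space M) X \<circ> X) x"
proof -
  have "inv_into (space M) X (X x) \<in> space M" "X x = X (inv_into (space M) X (X x))"
    using x by (simp_all add: inv_into_into f_inv_into_f)
  from det[OF x this] show ?thesis by simp
qed

lemma
  assumes X: "simple_function M X"
    and det: "\<And>x y. x \<in> space M \<Longrightarrow> y \<in> space M \<Longrightarrow> X x = X y \<Longrightarrow> Y x = Y y"
  shows simple_function_if_determined: "simple_function M Y"
    and entropy_le_if_determined: "\<H>(Y) \<le> \<H>(X)"
proof -
  define f where "f = Y \<circ> inv_into (space M) X"
  have Y: "\<And>x. x \<in> space M \<Longrightarrow> Y x = (f \<circ> X) x"
    unfolding f_def by (rule determined_factors[of X Y, OF det])
  show "simple_function M Y"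
    using simple_function_compose[OF X, of f] simple_function_cong[of M Y "f \<circ> X"] Y by simp
  have "\<H>(Y) = \<H>(f \<circ> X)" by (rule entropy_cong) (rule Y)
  also have "\<dots> \<le> \<H>(X)" by (rule entropy_data_processing[OF X])
  finally show "\<H>(Y) \<le> \<H>(X)" .
qed

lemma entropy_eq_if_same_partition:
  assumes X: "simple_function M X"
    and same: "\<And>x y. x \<in> space M \<Longrightarrow> y \<in> space M \<Longrightarrow> Y x = Y y \<longleftrightarrow> X x = X y"
  shows "\<H>(Y) = \<H>(X)"
proof (rule antisym)
  have det: "Y x = Y y" if "x \<in> space M" "y \<in> space M" "X x = X y" for x y
    using same that by metis
  show "\<H>(Y) \<le> \<H>(X)" using entropy_le_if_determined[OF X det] by simp
  have "simple_function M Y" using simple_function_if_determined[OF X det] by simp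
  then show "\<H>(X) \<le> \<H>(Y)" using entropy_le_if_determined same by metis
qed

lemma entropy_eq_sum_superset:
  assumes X: "simple_function M X" and T: "finite T" "X ` space M \<subseteq> T"
  shows "\<H>(X) = - (\<Sum>v\<in>T. prob (X -` {v} \<inter> space M) * log b (prob (X -` {v} \<inter> space M)))"
proof -
  have "\<H>(X) = - (\<Sum>v\<in>X ` space M. prob (X -` {v} \<inter> space M) * log b (prob (X -` {v} \<inter> space M)))"
    by (rule entropy_simple_distributed[OF simple_distributedI[OF X measure_nonneg refl]])
  also have "\<dots> = - (\<Sum>v\<in>T. prob (X -` {v} \<inter> space M) * log b (prob (X -` {v} \<inter> space M)))"
  proof -
    have "X -` {v} \<inter> space M = {}" if "v \<notin> X ` space M" for v using that by auto
    then show ?thesis using T by (intro arg_cong[where f=uminus] sum.mono_neutral_left) auto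
  qed
  finally show ?thesis .
qed

lemma sum_prob_comp:
  assumes V: "simple_function M V"
  shows "(\<Sum>v\<in>V ` space M. prob (V -` {v} \<inter> space M) * h (\<pi> v)) =
         (\<Sum>u\<in>(\<lambda>\<omega>. \<pi> (V \<omega>)) ` space M. prob ((\<lambda>\<omega>. \<pi> (V \<omega>)) -` {u} \<inter> space M) * h u)"
proof -
  have fin: "finite (V ` space M)" using simple_functionD(1)[OF V] .
  let ?fiber = "\<lambda>u. {v\<in>V ` space M. \<pi> v = u}"
  have prob_fiber: "(\<Sum>v\<in>?fiber u. prob (V -` {v} \<inter> space M)) = prob ((\<lambda>\<omega>. \<pi> (V \<omega>)) -` {u} \<inter> space M)"
    for u
  proof -
    have "(\<lambda>\<omega>. \<pi> (V \<omega>)) -` {u} \<inter> space M = (\<Union>v\<in>?fiber u. V -` {v} \<inter> space M)" by auto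
    moreover have "prob (\<Union>v\<in>?fiber u. V -` {v} \<inter> space M) = (\<Sum>v\<in>?fiber u. prob (V -` {v} \<inter> space M))"
      by (rule finite_measure_finite_Union) (auto simp: fin simple_functionD(2)[OF V] disjoint_family_on_def)
    ultimately show ?thesis by simp
  qed
  have "(\<Sum>v\<in>V ` space M. prob (V -` {v} \<inter> space M) * h (\<pi> v)) =
     (\<Sum>u\<in>\<pi> ` V ` space M. \<Sum>v\<in>?fiber u. prob (V -` {v} \<inter> space M) * h (\<pi> v))"
    by (rule sum.image_gen[OF fin])
  also have "\<dots> = (\<Sum>u\<in>\<pi> ` V ` space M. (\<Sum>v\<in>?fiber u. prob (V -` {v} \<inter> space M)) * h u)"
    by (auto simp: sum_distrib_right intro!: sum.cong)
  also have "\<dots> = (\<Sum>u\<in>\<pi> ` V ` space M. prob ((\<lambda>\<omega>. \<pi> (V \<omega>)) -` {u} \<inter> space M) * h u)"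
    by (simp only: prob_fiber)
  moreover have "\<pi> ` V ` space M = (\<lambda>\<omega>. \<pi> (V \<omega>)) ` space M" by auto
  ultimately show ?thesis by simp
qed

lemma sum_prob_log_prob_comp:
  assumes V: "simple_function M V"
  shows "(\<Sum>v\<in>V ` space M. prob (V -` {v} \<inter> space M) *
            log b (prob ((\<lambda>\<omega>. \<pi> (V \<omega>)) -` {\<pi> v} \<inter> space M))) = - \<H>(\<lambda>\<omega>. \<pi> (V \<omega>))"
proof -
  have "simple_function M (\<lambda>\<omega>. \<pi> (V \<omega>))"
    using simple_function_compose[OF V, of \<pi>] by (simp add: comp_def)
  from entropy_simple_distributed[OF simple_distributedI[OF this measure_nonneg refl]]
  show ?thesis
    by (simp add: sum_prob_comp[OF V, of "\<lambda>u. log b (prob ((\<lambda>\<omega>. \<pi> (V \<omega>)) -` {u} \<inter> space M))"])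
qed

text \<open>Expanding the defining sum of \<open>\<I>(X ; Y | Z) \<ge> 0\<close> gives the four entropies.\<close>
lemma entropy_submodular:
  assumes X: "simple_function M X" and Y: "simple_function M Y" and Z: "simple_function M Z"
  shows "\<H>(\<lambda>\<omega>. (X \<omega>, Y \<omega>, Z \<omega>)) + \<H>(Z) \<le> \<H>(\<lambda>\<omega>. (X \<omega>, Z \<omega>)) + \<H>(\<lambda>\<omega>. (Y \<omega>, Z \<omega>))"
proof -
  let ?U = "\<lambda>\<omega>. (X \<omega>, Y \<omega>, Z \<omega>)"
  let ?XZ = "\<lambda>\<omega>. (X \<omega>, Z \<omega>)"
  let ?YZ = "\<lambda>\<omega>. (Y \<omega>, Z \<omega>)"
  define pu where "pu u = prob (?U -` {u} \<inter> space M)" for u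
  define pxz where "pxz u = prob (?XZ -` {u} \<inter> space M)" for u
  define pyz where "pyz u = prob (?YZ -` {u} \<inter> space M)" for u
  define pz where "pz u = prob (Z -` {u} \<inter> space M)" for u
  have U: "simple_function M ?U" and XZ: "simple_function M ?XZ" and YZ: "simple_function M ?YZ"
    using X Y Z by (auto intro: simple_function_Pair)
  have marginals_ge: "pu (x, y, z) \<le> pxz (x, z)" "pu (x, y, z) \<le> pyz (y, z)" "pu (x, y, z) \<le> pz z"
    for x y z unfolding pu_def pxz_def pyz_def pz_def
    by (auto intro!: finite_measure_mono simple_functionD(2) XZ YZ Z)
  have "0 \<le> \<I>(X ; Y | Z)" by (rule conditional_mutual_information_nonneg[OF X Y Z])
  also have "\<I>(X ; Y | Z) = (\<Sum>(x, y, z)\<in>?U ` space M.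
      pu (x, y, z) * log b (pu (x, y, z) / (pxz (x, z) * (pyz (y, z) / pz z))))"
    unfolding pu_def pxz_def pyz_def pz_def
    by (rule conditional_mutual_information_eq[OF simple_distributedI[OF Z measure_nonneg refl]
       simple_distributedI[OF YZ measure_nonneg refl] simple_distributedI[OF XZ measure_nonneg refl]
       simple_distributedI[OF U measure_nonneg refl]])
  also have "\<dots> = (\<Sum>u\<in>?U ` space M. pu u * log b (pu u)
       - pu u * log b (pxz (fst u, snd (snd u))) - pu u * log b (pyz (snd u))
       + pu u * log b (pz (snd (snd u))))"
  proof (rule sum.cong[OF refl])
    fix u assume "u \<in> ?U ` space M"
    obtain x y z where u: "u = (x, y, z)" by (cases u) auto
    show "(case u of (x, y, z) \<Rightarrow> pu (x, y, z) * log b (pu (x, y, z) / (pxz (x, z) * (pyz (y, z) / pz z)))) =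
       pu u * log b (pu u) - pu u * log b (pxz (fst u, snd (snd u)))
       - pu u * log b (pyz (snd u)) + pu u * log b (pz (snd (snd u)))"
    proof (cases "pu u = 0")
      case False
      then have "pu u > 0" unfolding pu_def using measure_nonneg[of M] by (simp add: less_le)
      with marginals_ge[of x y z] show ?thesis by (simp add: u log_divide log_mult algebra_simps)
    qed (simp add: u)
  qed
  also have "\<dots> = - \<H>(?U) + \<H>(?XZ) + \<H>(?YZ) - \<H>(Z)"
    using sum_prob_log_prob_comp[OF U, of id] sum_prob_log_prob_comp[OF U, of "\<lambda>u. (fst u, snd (snd u))"]
      sum_prob_log_prob_comp[OF U, of snd] sum_prob_log_prob_comp[OF U, of "\<lambda>u. snd (snd u)"]
    by (simp add: sum.distrib sum_subtractf pu_def pxz_def pyz_def pz_def)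
  finally show ?thesis by simp
qed

lemma entropy_tendsto_0_if_concentrated:
  assumes X: "\<And>k. simple_function M (X k)" and T: "finite T" "\<And>k. X k ` space M \<subseteq> T"
    and conc: "(\<lambda>k. prob {\<omega>\<in>space M. X k \<omega> \<noteq> c}) \<longlonglongrightarrow> 0"
  shows "(\<lambda>k. \<H>(X k)) \<longlonglongrightarrow> 0"
proof -
  define q where "q k y = prob (X k -` {y} \<inter> space M)" for k y
  have H: "\<H>(X k) = - (\<Sum>y\<in>T. q k y * log b (q k y))" for k
    unfolding q_def by (rule entropy_eq_sum_superset[OF X T])
  have bad_sets: "{\<omega>\<in>space M. X k \<omega> \<noteq> c} \<in> sets M" for k
    using simple_functionD(2)[OF X, of k "- {c}"] by (simp add: vimage_def Int_def conj_commute)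
  have lim: "(\<lambda>k. q k y * log b (q k y)) \<longlonglongrightarrow> 0" for y
  proof (cases "y = c")
    case True
    have "q k y = 1 - prob {\<omega>\<in>space M. X k \<omega> \<noteq> c}" for k
    proof -
      have "X k -` {y} \<inter> space M = space M - {\<omega>\<in>space M. X k \<omega> \<noteq> c}" using True by auto
      then show ?thesis unfolding q_def using prob_compl[OF bad_sets] by simp
    qed
    then have "(\<lambda>k. q k y) \<longlonglongrightarrow> 1" using tendsto_diff[OF tendsto_const conc, of 1] by simp
    moreover have "isCont (\<lambda>x. x * log b x) 1" using b_gt_1 by (intro continuous_intros) auto
    ultimately have "(\<lambda>k. q k y * log b (q k y)) \<longlonglongrightarrow> 1 * log b 1"
      by (rule isCont_tendsto_compose[rotated])
    then show ?thesis by simp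
  next
    case False
    have q0: "(\<lambda>k. q k y) \<longlonglongrightarrow> 0"
    proof (rule tendsto_sandwich[OF _ _ tendsto_const conc])
      show "\<forall>\<^sub>F k in sequentially. 0 \<le> q k y" unfolding q_def by simp
      show "\<forall>\<^sub>F k in sequentially. q k y \<le> prob {\<omega>\<in>space M. X k \<omega> \<noteq> c}"
      proof (intro always_eventually allI)
        fix k
        show "q k y \<le> prob {\<omega>\<in>space M. X k \<omega> \<noteq> c}"
          unfolding q_def using False by (intro finite_measure_mono[OF _ bad_sets]) auto
      qed
    qed
    have cont: "continuous (at 0 within {0..1}) (\<lambda>x::real. x * log b x)"
    proof -
      have "((\<lambda>x::real. x * ln x / ln b) \<longlongrightarrow> 0) (at_right 0)"
        by (rule tendsto_divide_zero) real_asymp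
      then show ?thesis by (simp add: continuous_within at_within_Icc_at_right log_def)
    qed
    have "(\<lambda>k. q k y * log b (q k y)) \<longlonglongrightarrow> 0 * log b 0"
      by (rule continuous_within_tendsto_compose'[OF cont _ q0]) (simp add: q_def)
    then show ?thesis by simp
  qed
  have "(\<lambda>k. - (\<Sum>y\<in>T. q k y * log b (q k y))) \<longlonglongrightarrow> - (\<Sum>y\<in>T. 0)"
    by (intro tendsto_minus tendsto_sum lim)
  then show ?thesis unfolding H by simp
qed

end

section \<open>Words, ranks and first occurrences\<close>

lemma word_eq_iff: "word X i j x = word X i j y \<longleftrightarrow> (\<forall>t\<in>{i..j}. X t x = X t y)"
  unfolding word_def map_eq_conv by auto

lemma length_word: "length (word X i j x) = Suc j - i"
  unfolding word_def by (simp del: upt_Suc)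

lemma word_append: "i \<le> Suc j \<Longrightarrow> j \<le> m \<Longrightarrow> word X i m x = word X i j x @ word X (Suc j) m x"
  unfolding word_def using upt_add_eq_append[of i "Suc j" "m - j"] by (simp del: upt_Suc)

lemma word_eq_split_iff:
  assumes "i \<le> Suc j" "j \<le> m"
  shows "word X i m x = word X i m y \<longleftrightarrow>
    word X i j x = word X i j y \<and> word X (Suc j) m x = word X (Suc j) m y"
  using word_append[OF assms, of X x] word_append[OF assms, of X y] by (simp add: length_word)

lemma rank_var_eq_card: "rank_var S t x = card {i\<in>{1..t}. S i x \<le> S t x}"
  unfolding rank_var_def by (simp add: sum.inter_filter[symmetric])

lemma rank_var_cong: "(\<And>i. i \<in> {1..t} \<Longrightarrow> S i x = S i y) \<Longrightarrow> rank_var S t x = rank_var S t y"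
  unfolding rank_var_def by (intro sum.cong) auto

definition new_symbol :: "(nat \<Rightarrow> 'a \<Rightarrow> nat) \<Rightarrow> nat \<Rightarrow> 'a \<Rightarrow> bool" where
  "new_symbol S j \<omega> \<longleftrightarrow> (\<forall>i. 1 \<le> i \<and> i < j \<longrightarrow> S i \<omega> \<noteq> S j \<omega>)"

lemma new_symbol_cong: "(\<And>i. i \<in> {1..j} \<Longrightarrow> S i x = S i y) \<Longrightarrow> new_symbol S j x = new_symbol S j y"
  unfolding new_symbol_def by auto

lemma rank_var_less:
  assumes past: "\<And>i. 1 \<le> i \<Longrightarrow> i < t \<Longrightarrow> S i x = S i y"
    and old: "\<not> new_symbol S t y" and less: "S t x < S t y"
  shows "rank_var S t x < rank_var S t y"
proof -
  obtain i0 where i0: "1 \<le> i0" "i0 < t" "S i0 y = S t y" using old unfolding new_symbol_def by blast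
  have sub: "{i\<in>{1..t}. S i x \<le> S t x} \<subseteq> {i\<in>{1..t}. S i y \<le> S t y}"
    using past less by (force simp: order_le_less)
  have "i0 \<in> {i\<in>{1..t}. S i y \<le> S t y}" "i0 \<notin> {i\<in>{1..t}. S i x \<le> S t x}"
    using i0 past[of i0] less by auto
  with sub have "{i\<in>{1..t}. S i x \<le> S t x} \<subset> {i\<in>{1..t}. S i y \<le> S t y}" by blast
  then show ?thesis unfolding rank_var_eq_card by (rule psubset_card_mono[rotated]) simp
qed

text \<open>The symbols are recovered one at a time: a symbol that already occurred among
  \<open>S\<^sub>1, \<dots>, S\<^sub>t\<^sub>-\<^sub>1\<close> is pinned down by its rank among them.\<close>
lemma word_eq_if_rank_word_eq:
  assumes prefix: "word S 1 k x = word S 1 k y"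
    and ranks: "word (rank_var S) (k+1) (k+l) x = word (rank_var S) (k+1) (k+l) y"
    and old_x: "\<forall>j\<in>{k+1..k+l}. \<not> new_symbol S j x"
    and old_y: "\<forall>j\<in>{k+1..k+l}. \<not> new_symbol S j y"
  shows "word S (k+1) (k+l) x = word S (k+1) (k+l) y"
proof -
  have "S t x = S t y" if "1 \<le> t" "t \<le> k+l" for t
    using that
  proof (induction t rule: less_induct)
    case (less t)
    show ?case
    proof (cases "t \<le> k")
      case True
      then show ?thesis using prefix less.prems unfolding word_eq_iff by auto
    next
      case False
      then have t: "t \<in> {k+1..k+l}" using less.prems by auto
      have past: "S i x = S i y" if "1 \<le> i" "i < t" for i using less.IH that less.prems by auto
      have "rank_var S t x = rank_var S t y" using ranks t unfolding word_eq_iff by auto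
      then show ?thesis
        using rank_var_less[of t S x y, OF past] rank_var_less[of t S y x, OF past[symmetric]]
          old_x old_y t by (metis less_irrefl linorder_neqE_nat)
    qed
  qed
  then show ?thesis unfolding word_eq_iff by auto
qed

lemma card_new_symbols_le:
  assumes "finite A" "\<And>i. i \<in> {1..n} \<Longrightarrow> S i \<omega> \<in> A"
  shows "card {j\<in>{1..n}. new_symbol S j \<omega>} \<le> card A"
proof (rule card_inj_on_le)
  show "inj_on (\<lambda>j. S j \<omega>) {j\<in>{1..n}. new_symbol S j \<omega>}"
    by (rule inj_onI) (metis (no_types, lifting) mem_Collect_eq atLeastAtMost_iff new_symbol_def linorder_neqE_nat)
qed (use assms in auto)

text \<open>Reveals the block of symbols only if it contains a first occurrence; together with the
  past and the ranks it determines the block.\<close>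
definition innovation :: "(nat \<Rightarrow> 'a \<Rightarrow> nat) \<Rightarrow> nat \<Rightarrow> nat \<Rightarrow> 'a \<Rightarrow> nat list option" where
  "innovation S k l \<omega> =
    (if \<exists>j\<in>{k+1..k+l}. new_symbol S j \<omega> then Some (word S (k+1) (k+l) \<omega>) else None)"

lemma word_eq_if_innovation_eq:
  assumes prefix: "word S 1 k x = word S 1 k y"
    and ranks: "word (rank_var S) (k+1) (k+l) x = word (rank_var S) (k+1) (k+l) y"
    and innovation: "innovation S k l x = innovation S k l y"
  shows "word S (k+1) (k+l) x = word S (k+1) (k+l) y"
proof (cases "\<exists>j\<in>{k+1..k+l}. new_symbol S j x")
  case True
  with innovation show ?thesis unfolding innovation_def by (auto split: if_splits)
next
  case False
  with innovation have "\<not> (\<exists>j\<in>{k+1..k+l}. new_symbol S j y)"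
    unfolding innovation_def by (auto split: if_splits)
  with False show ?thesis using word_eq_if_rank_word_eq[OF prefix ranks] by blast
qed

locale finite_source = information_space +
  fixes S :: "nat \<Rightarrow> 'a \<Rightarrow> nat" and N :: nat
  assumes measurable_S: "\<And>n. n \<ge> 1 \<Longrightarrow> S n \<in> measurable M (count_space {1..N})"
begin

lemma S_in_alphabet: "n \<ge> 1 \<Longrightarrow> \<omega> \<in> space M \<Longrightarrow> S n \<omega> \<in> {1..N}"
  using measurable_space[OF measurable_S] by auto

lemma simple_function_S: "n \<ge> 1 \<Longrightarrow> simple_function M (S n)"
  using measurable_S[of n] S_in_alphabet[of n]
  by (auto simp: simple_function_def intro: finite_subset[of _ "{1..N}"] measurable_sets)

lemma simple_function_word:
  assumes "i \<ge> 1"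
  shows "simple_function M (word S i j)"
proof -
  have "simple_function M (\<lambda>\<omega>. map (\<lambda>t. S t \<omega>) ts)" if "\<forall>t\<in>set ts. t \<ge> 1" for ts
    using that
  proof (induction ts)
    case (Cons t ts)
    then have "simple_function M (\<lambda>\<omega>. (S t \<omega>, map (\<lambda>t. S t \<omega>) ts))"
      by (intro simple_function_Pair simple_function_S) auto
    from simple_function_compose[OF this, of "case_prod Cons"] show ?case by (simp add: comp_def)
  qed (simp add: simple_function_def)
  from this[of "[i..<Suc j]"] show ?thesis using assms unfolding word_def by (simp del: upt_Suc)
qed

lemma simple_function_if_determined_by_prefix:
  assumes "\<And>x y. x \<in> space M \<Longrightarrow> y \<in> space M \<Longrightarrow> (\<forall>t\<in>{1..n}. S t x = S t y) \<Longrightarrow> Y x = Y y"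
  shows "simple_function M Y"
  by (rule simple_function_if_determined[OF simple_function_word[of 1 n]])
     (use assms in \<open>simp_all only: word_eq_iff\<close>)

lemma word_in_lists: "i \<ge> 1 \<Longrightarrow> \<omega> \<in> space M \<Longrightarrow> word S i j \<omega> \<in> {w. set w \<subseteq> {1..N} \<and> length w = Suc j - i}"
  using S_in_alphabet by (auto simp: word_def simp del: upt_Suc)

lemma entropy_word_split:
  assumes "1 \<le> i" "i \<le> Suc j" "j \<le> m"
  shows "\<H>(\<lambda>\<omega>. (word S i j \<omega>, word S (Suc j) m \<omega>)) = \<H>(word S i m)"
proof (rule entropy_eq_if_same_partition[OF simple_function_word[OF assms(1)]])
  fix x y
  show "(word S i j x, word S (Suc j) m x) = (word S i j y, word S (Suc j) m y) \<longleftrightarrow>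
      word S i m x = word S i m y"
    using word_eq_split_iff[OF assms(2,3), of S x y] by simp
qed

lemma cond_entropy_block_eq:
  "\<H>(word S (k+1) (k+l) | word S 1 k) = \<H>(word S 1 (k+l)) - \<H>(word S 1 k)"
proof -
  have "\<H>(\<lambda>\<omega>. (word S 1 k \<omega>, word S (k+1) (k+l) \<omega>)) =
      \<H>(word S 1 k) + \<H>(word S (k+1) (k+l) | word S 1 k)"
    by (rule entropy_chain_rule[OF simple_function_word simple_function_word]) simp_all
  then show ?thesis using entropy_word_split[of 1 k "k+l"] by simp
qed

lemma simple_function_rank_word: "simple_function M (word (rank_var S) (k+1) (k+l))"
proof (rule simple_function_if_determined_by_prefix[of "k+l"])
  fix x y assume "\<forall>t\<in>{1..k+l}. S t x = S t y"
  then show "word (rank_var S) (k+1) (k+l) x = word (rank_var S) (k+1) (k+l) y"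
    unfolding word_eq_iff by (auto intro!: rank_var_cong)
qed

lemma simple_function_innovation: "simple_function M (innovation S k l)"
proof (rule simple_function_if_determined_by_prefix[of "k+l"])
  fix x y assume agree: "\<forall>t\<in>{1..k+l}. S t x = S t y"
  then have "new_symbol S j x = new_symbol S j y" if "j \<in> {k+1..k+l}" for j
    using that by (intro new_symbol_cong) auto
  moreover have "word S (k+1) (k+l) x = word S (k+1) (k+l) y"
    using agree unfolding word_eq_iff by auto
  ultimately show "innovation S k l x = innovation S k l y"
    unfolding innovation_def by (metis (no_types, lifting))
qed

lemma word_pair_eq_iff:
  "(word S 1 k x, word S (k+1) (k+l) x) = (word S 1 k y, word S (k+1) (k+l) y) \<longleftrightarrow>
    (\<forall>t\<in>{1..k+l}. S t x = S t y)"
  using word_eq_split_iff[of 1 k "k+l" S x y] by (simp add: word_eq_iff)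

lemma cond_entropy_rank_block_le:
  "\<H>(word (rank_var S) (k+1) (k+l) | word S 1 k) \<le> \<H>(word S (k+1) (k+l) | word S 1 k)"
proof -
  let ?W = "word S 1 k" and ?B = "word S (k+1) (k+l)" and ?R = "word (rank_var S) (k+1) (k+l)"
  have W: "simple_function M ?W" and B: "simple_function M ?B" by (simp_all add: simple_function_word)
  have "\<H>(\<lambda>\<omega>. (?W \<omega>, ?R \<omega>)) \<le> \<H>(\<lambda>\<omega>. (?W \<omega>, ?B \<omega>))"
  proof (rule entropy_le_if_determined[OF simple_function_Pair[OF W B]])
    fix x y assume "(?W x, ?B x) = (?W y, ?B y)"
    then have "\<forall>t\<in>{1..k+l}. S t x = S t y" by (simp only: word_pair_eq_iff)
    then show "(?W x, ?R x) = (?W y, ?R y)" by (auto simp: word_eq_iff intro!: rank_var_cong)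
  qed
  then show ?thesis
    using entropy_chain_rule[OF W B] entropy_chain_rule[OF W simple_function_rank_word] by simp
qed

lemma cond_entropy_block_le_rank_block:
  "\<H>(word S (k+1) (k+l) | word S 1 k) \<le>
    \<H>(word (rank_var S) (k+1) (k+l) | word S 1 k) + \<H>(innovation S k l)"
proof -
  let ?W = "word S 1 k" and ?B = "word S (k+1) (k+l)" and ?R = "word (rank_var S) (k+1) (k+l)"
  let ?V = "\<lambda>\<omega>. (?W \<omega>, ?R \<omega>)"
  have W: "simple_function M ?W" and B: "simple_function M ?B" by (simp_all add: simple_function_word)
  have V: "simple_function M ?V" by (rule simple_function_Pair[OF W simple_function_rank_word])
  note I = simple_function_innovation[of k l]
  have "\<H>(\<lambda>\<omega>. (?W \<omega>, ?B \<omega>)) \<le> \<H>(\<lambda>\<omega>. (?V \<omega>, innovation S k l \<omega>))"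
  proof (rule entropy_le_if_determined[OF simple_function_Pair[OF V I]])
    fix x y assume "(?V x, innovation S k l x) = (?V y, innovation S k l y)"
    then show "(?W x, ?B x) = (?W y, ?B y)" using word_eq_if_innovation_eq[of S k x y l] by simp
  qed
  also have "\<dots> = \<H>(?V) + \<H>(innovation S k l | ?V)" by (rule entropy_chain_rule[OF V I])
  also have "\<dots> \<le> \<H>(?V) + \<H>(innovation S k l)" using conditional_entropy_less_eq_entropy[OF I V] by simp
  finally show ?thesis
    using entropy_chain_rule[OF W B] entropy_chain_rule[OF W simple_function_rank_word] by simp
qed

lemma sets_new_symbol: "{\<omega>\<in>space M. new_symbol S j \<omega>} \<in> sets M"
proof -
  have "simple_function M (new_symbol S j)"
    by (rule simple_function_if_determined_by_prefix[of j], rule new_symbol_cong) auto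
  from simple_functionD(2)[OF this, of "{True}"] show ?thesis by (simp add: vimage_def Int_def conj_commute)
qed

text \<open>The sum is the expected number of first occurrences, and each of the \<open>N\<close> symbols
  occurs for the first time at most once.\<close>
lemma sum_prob_new_symbol_le: "(\<Sum>j=1..n. prob {\<omega>\<in>space M. new_symbol S j \<omega>}) \<le> N"
proof -
  let ?A = "\<lambda>j. {\<omega>\<in>space M. new_symbol S j \<omega>}"
  have int: "integrable M (indicator (?A j) :: 'a \<Rightarrow> real)" for j
    using sets_new_symbol[of j] by (intro integrable_real_indicator) (auto simp: less_top[symmetric])
  have "(\<Sum>j=1..n. prob (?A j)) = expectation (\<lambda>\<omega>. \<Sum>j=1..n. indicator (?A j) \<omega>)"
    by (simp add: Bochner_Integration.integral_sum[OF int] Int_absorb2)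
  also have "\<dots> \<le> expectation (\<lambda>\<omega>. real N)"
  proof (rule integral_mono)
    fix \<omega> assume \<omega>: "\<omega> \<in> space M"
    have "(\<Sum>j=1..n. indicator (?A j) \<omega> :: real) = card {j\<in>{1..n}. new_symbol S j \<omega>}"
      using \<omega> by (simp add: indicator_def sum.If_cases Int_def)
    also have "\<dots> \<le> card {1..N}"
      using card_new_symbols_le[of "{1..N}" n S \<omega>] S_in_alphabet \<omega> by simp
    finally show "(\<Sum>j=1..n. indicator (?A j) \<omega>) \<le> real N" by simp
  qed (use int in auto)
  finally show ?thesis by (simp add: prob_space)
qed

lemma prob_new_symbol_tendsto_0: "(\<lambda>j. prob {\<omega>\<in>space M. new_symbol S j \<omega>}) \<longlonglongrightarrow> 0"
proof -
  have "summable (\<lambda>j. prob {\<omega>\<in>space M. new_symbol S (Suc j) \<omega>})"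
  proof (rule summableI_nonneg_bounded)
    show "(\<Sum>j<n. prob {\<omega>\<in>space M. new_symbol S (Suc j) \<omega>}) \<le> real N" for n
      using sum_prob_new_symbol_le[of n] by (simp add: sum.atLeast1_atMost_eq)
  qed simp
  then show ?thesis by (rule LIMSEQ_imp_Suc[OF summable_LIMSEQ_zero])
qed

lemma prob_innovation_tendsto_0: "(\<lambda>k. prob {\<omega>\<in>space M. innovation S k l \<omega> \<noteq> None}) \<longlonglongrightarrow> 0"
proof (rule tendsto_sandwich[OF _ _ tendsto_const])
  let ?A = "\<lambda>j. {\<omega>\<in>space M. new_symbol S j \<omega>}"
  show "\<forall>\<^sub>F k in sequentially. prob {\<omega>\<in>space M. innovation S k l \<omega> \<noteq> None} \<le> (\<Sum>i<l. prob (?A (k+1+i)))"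
  proof (intro always_eventually allI)
    fix k
    have "{\<omega>\<in>space M. innovation S k l \<omega> \<noteq> None} \<subseteq> (\<Union>i<l. ?A (k+1+i))"
    proof
      fix \<omega> assume "\<omega> \<in> {\<omega>\<in>space M. innovation S k l \<omega> \<noteq> None}"
      then obtain j where "j \<in> {k+1..k+l}" "new_symbol S j \<omega>" "\<omega> \<in> space M"
        unfolding innovation_def by (auto split: if_splits)
      then show "\<omega> \<in> (\<Union>i<l. ?A (k+1+i))"
        by (intro UN_I[of "j - (k+1)"]) auto
    qed
    then have "prob {\<omega>\<in>space M. innovation S k l \<omega> \<noteq> None} \<le> prob (\<Union>i<l. ?A (k+1+i))"
      by (rule finite_measure_mono) (auto intro: sets_new_symbol)
    also have "\<dots> \<le> (\<Sum>i<l. prob (?A (k+1+i)))"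
      by (rule measure_subadditive_finite) (auto intro: sets_new_symbol)
    finally show "prob {\<omega>\<in>space M. innovation S k l \<omega> \<noteq> None} \<le> (\<Sum>i<l. prob (?A (k+1+i)))" .
  qed
  have "(\<lambda>k. prob (?A (k+1+i))) \<longlonglongrightarrow> 0" for i
    using LIMSEQ_ignore_initial_segment[OF prob_new_symbol_tendsto_0, of "1+i"] by (simp add: add.assoc)
  then show "(\<lambda>k. \<Sum>i<l. prob (?A (k+1+i))) \<longlonglongrightarrow> 0"
    using tendsto_sum[of "{..<l}" "\<lambda>i k. prob (?A (k+1+i))" "\<lambda>_. 0"] by simp
qed simp

lemma entropy_innovation_tendsto_0: "(\<lambda>k. \<H>(innovation S k l)) \<longlonglongrightarrow> 0"
proof (rule entropy_tendsto_0_if_concentrated[OF simple_function_innovation _ _ prob_innovation_tendsto_0])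
  let ?T = "insert None (Some ` {w. set w \<subseteq> {1..N} \<and> length w = l})"
  show "finite ?T" by (simp add: finite_lists_length_eq)
  show "innovation S k l ` space M \<subseteq> ?T" for k
    using word_in_lists[of "k+1" _ "k+l"] by (auto simp: innovation_def)
qed

end

lemma measurable_map_coordinates:
  assumes "countable A"
  shows "(\<lambda>x. map x ts) \<in> measurable (PiM UNIV (\<lambda>_. count_space A)) (count_space UNIV)"
proof (induction ts)
  case (Cons t ts)
  have "(\<lambda>x. x t # map x ts) \<in> measurable (PiM UNIV (\<lambda>_. count_space A)) (count_space UNIV)"
  proof (rule measurable_compose_countable'[where f="\<lambda>a x. a # map x ts" and g="\<lambda>x. x t", OF _ _ assms])
    show "(\<lambda>x. a # map x ts) \<in> measurable (PiM UNIV (\<lambda>_. count_space A)) (count_space UNIV)" for a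
      using measurable_compose[OF Cons.IH, of "Cons a"] by simp
    show "(\<lambda>x. x t) \<in> measurable (PiM UNIV (\<lambda>_. count_space A)) (count_space A)"
      by (rule measurable_component_singleton) simp
  qed
  then show ?case by simp
qed simp

locale stationary_source = finite_source +
  assumes stationary: "stationary_model (seq_model M N S)"
begin

lemma measurable_sequence: "(\<lambda>\<omega> n. S (Suc n) \<omega>) \<in> measurable M (PiM UNIV (\<lambda>_. count_space {1..N}))"
proof -
  have S: "S (Suc n) \<in> measurable M (count_space {1..N})" for n by (rule measurable_S) simp
  show ?thesis by (rule measurable_PiM_single') (use S measurable_space[OF S] in auto)
qed

lemma prob_word_shift:
  assumes "1 \<le> i"
  shows "prob (word S (Suc i) (Suc j) -` {w} \<inter> space M) = prob (word S i j -` {w} \<inter> space M)"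
proof -
  let ?P = "PiM UNIV (\<lambda>_. count_space {1..N}) :: (nat \<Rightarrow> nat) measure"
  let ?m = "seq_model M N S"
  let ?F = "\<lambda>\<omega> n. S (Suc n) \<omega>"
  define A where "A = {x\<in>space ?P. map x [i-1..<j] = w}"
  have A: "A \<in> sets ?P"
    using measurable_sets[OF measurable_map_coordinates, of "{1..N}" "{w}" "[i-1..<j]"]
    by (simp add: A_def vimage_def Int_def conj_commute)
  have sets_m: "sets ?m = sets ?P" and space_m: "space ?m = space ?P" by (simp_all add: seq_model_def)
  have shift: "left_shift \<in> measurable ?m ?m" "distr ?m ?m left_shift = ?m"
    using stationary unfolding stationary_model_def by auto
  have upt_shift: "[i..<Suc j] = map Suc [i-1..<j]" "[Suc i..<Suc (Suc j)] = map (Suc \<circ> Suc) [i-1..<j]"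
    using assms by (simp_all add: map_Suc_upt flip: map_map del: upt_Suc)
  have "map (?F \<omega>) [i-1..<j] = word S i j \<omega>" for \<omega>
    unfolding word_def upt_shift by simp
  then have "?F -` A \<inter> space M = word S i j -` {w} \<inter> space M"
    using measurable_space[OF measurable_sequence] unfolding A_def by auto
  then have measure_A: "measure ?m A = prob (word S i j -` {w} \<inter> space M)"
    unfolding seq_model_def using measure_distr[OF measurable_sequence A] by simp
  have "map (left_shift (?F \<omega>)) [i-1..<j] = word S (Suc i) (Suc j) \<omega>" for \<omega>
    unfolding word_def left_shift_def upt_shift by simp
  then have "?F -` (left_shift -` A \<inter> space ?m) \<inter> space M = word S (Suc i) (Suc j) -` {w} \<inter> space M"
    using measurable_space[OF measurable_sequence] measurable_space[OF shift(1)]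
    unfolding A_def space_m by auto
  moreover have "left_shift -` A \<inter> space ?m \<in> sets ?P"
    using measurable_sets[OF shift(1), of A] A sets_m by simp
  ultimately have "measure ?m (left_shift -` A \<inter> space ?m) = prob (word S (Suc i) (Suc j) -` {w} \<inter> space M)"
    unfolding seq_model_def using measure_distr[OF measurable_sequence] by simp
  moreover have "measure ?m (left_shift -` A \<inter> space ?m) = measure ?m A"
    using measure_distr[OF shift(1), of A] shift(2) A sets_m by simp
  ultimately show ?thesis using measure_A by simp
qed

lemma entropy_word_shift:
  assumes "1 \<le> i"
  shows "\<H>(word S (Suc i) (Suc j)) = \<H>(word S i j)"
proof -
  let ?L = "{w. set w \<subseteq> {1..N} \<and> length w = Suc j - i}"
  have L: "finite ?L" by (simp add: finite_lists_length_eq)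
  have "word S (Suc i) (Suc j) ` space M \<subseteq> ?L" "word S i j ` space M \<subseteq> ?L"
    using word_in_lists[of "Suc i" _ "Suc j"] word_in_lists[of i _ j] assms by auto
  with L show ?thesis
    using assms by (simp add: entropy_eq_sum_superset simple_function_word prob_word_shift)
qed

lemma entropy_word_submodular:
  "\<H>(word S 1 (Suc (k+l))) + \<H>(word S 1 k) \<le> \<H>(word S 1 (Suc k)) + \<H>(word S 1 (k+l))"
proof -
  let ?X = "word S 1 1" and ?Z = "word S 2 (Suc k)" and ?Y = "word S (Suc (Suc k)) (Suc (k+l))"
  have split:
    "word S 1 (Suc k) x = word S 1 (Suc k) y \<longleftrightarrow> ?X x = ?X y \<and> ?Z x = ?Z y"
    "word S 2 (Suc (k+l)) x = word S 2 (Suc (k+l)) y \<longleftrightarrow> ?Z x = ?Z y \<and> ?Y x = ?Y y"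
    "word S 1 (Suc (k+l)) x = word S 1 (Suc (k+l)) y \<longleftrightarrow> word S 1 (Suc k) x = word S 1 (Suc k) y \<and> ?Y x = ?Y y"
    for x y
    by (simp_all only: word_eq_split_iff[of 1 1 "Suc k"] word_eq_split_iff[of 2 "Suc k" "Suc (k+l)"]
      word_eq_split_iff[of 1 "Suc k" "Suc (k+l)"] Suc_1)
  have "\<H>(\<lambda>\<omega>. (?X \<omega>, ?Y \<omega>, ?Z \<omega>)) + \<H>(?Z) \<le> \<H>(\<lambda>\<omega>. (?X \<omega>, ?Z \<omega>)) + \<H>(\<lambda>\<omega>. (?Y \<omega>, ?Z \<omega>))"
    by (intro entropy_submodular simple_function_word) simp_all
  moreover have "\<H>(\<lambda>\<omega>. (?X \<omega>, ?Y \<omega>, ?Z \<omega>)) = \<H>(word S 1 (Suc (k+l)))"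
    by (rule entropy_eq_if_same_partition[OF simple_function_word]) (auto simp: split simp del: One_nat_def)
  moreover have "\<H>(\<lambda>\<omega>. (?X \<omega>, ?Z \<omega>)) = \<H>(word S 1 (Suc k))"
    by (rule entropy_eq_if_same_partition[OF simple_function_word]) (auto simp: split simp del: One_nat_def)
  moreover have "\<H>(\<lambda>\<omega>. (?Y \<omega>, ?Z \<omega>)) = \<H>(word S 2 (Suc (k+l)))"
    by (rule entropy_eq_if_same_partition[OF simple_function_word]) (auto simp: split simp del: One_nat_def)
  moreover have "\<H>(word S 2 (Suc (k+l))) = \<H>(word S 1 (k+l))" "\<H>(?Z) = \<H>(word S 1 k)"
    using entropy_word_shift[of 1 "k+l"] entropy_word_shift[of 1 k] by (simp_all add: numeral_2_eq_2)
  ultimately show ?thesis by simp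
qed

lemma decseq_cond_entropy_block: "decseq (\<lambda>k. \<H>(word S (k+1) (k+l) | word S 1 k))"
proof (rule decseq_SucI)
  fix k
  show "\<H>(word S (Suc k + 1) (Suc k + l) | word S 1 (Suc k)) \<le> \<H>(word S (k+1) (k+l) | word S 1 k)"
    using cond_entropy_block_eq[of "Suc k" l] cond_entropy_block_eq[of k l] entropy_word_submodular[of k l]
    by simp
qed

theorem cond_entropy_rank_block_tendsto:
  "\<exists>L. (\<lambda>k. \<H>(word (rank_var S) (k+1) (k+l) | word S 1 k)) \<longlonglongrightarrow> L
     \<and> (\<lambda>k. \<H>(word S (k+1) (k+l) | word S 1 k)) \<longlonglongrightarrow> L"
proof -
  define a where "a k = \<H>(word S (k+1) (k+l) | word S 1 k)" for k
  define c where "c k = \<H>(word (rank_var S) (k+1) (k+l) | word S 1 k)" for k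
  have "\<forall>k. 0 \<le> a k" unfolding a_def
    by (intro allI conditional_entropy_nonneg simple_function_word) simp_all
  then obtain L where a: "a \<longlonglongrightarrow> L"
    using decseq_cond_entropy_block decseq_convergent unfolding a_def by blast
  have "(\<lambda>k. a k - c k) \<longlonglongrightarrow> 0"
  proof (rule tendsto_sandwich[OF _ _ tendsto_const entropy_innovation_tendsto_0])
    show "\<forall>\<^sub>F k in sequentially. 0 \<le> a k - c k"
      using cond_entropy_rank_block_le unfolding a_def c_def by simp
    show "\<forall>\<^sub>F k in sequentially. a k - c k \<le> \<H>(innovation S k l)"
      using cond_entropy_block_le_rank_block unfolding a_def c_def by (simp add: algebra_simps)
  qed
  with a have "(\<lambda>k. a k - (a k - c k)) \<longlonglongrightarrow> L - 0" by (rule tendsto_diff)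
  then have "c \<longlonglongrightarrow> L" by simp
  with a show ?thesis unfolding a_def c_def by blast
qed

end

theorem lemma1:
  fixes M :: "'a measure" and S :: "nat \<Rightarrow> 'a \<Rightarrow> nat" and N :: nat and l :: nat
  assumes "prob_space M"
    and "N \<ge> 1"
    and "\<And>n. n \<ge> 1 \<Longrightarrow> S n \<in> measurable M (count_space {1..N})"
    and "stationary_model (seq_model M N S)"
    and "ergodic_model (seq_model M N S)"
    and "l \<ge> 1"
  shows "\<exists>L. (\<lambda>k. cond_entropy2 M (word (rank_var S) (k+1) (k+l)) (word S 1 k)) \<longlonglongrightarrow> L
           \<and> (\<lambda>k. cond_entropy2 M (word S (k+1) (k+l)) (word S 1 k)) \<longlonglongrightarrow> L"
proof -
  interpret stationary_source M 2 S N
    using assms(1,3,4)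
    by (simp add: stationary_source_def stationary_source_axioms_def finite_source_def
        finite_source_axioms_def information_space_def information_space_axioms_def)
  show ?thesis unfolding cond_entropy2_def by (rule cond_entropy_rank_block_tendsto)
qed

end
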